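(* Let $1\le n\le N$, $E\in I$, and let $$\gamma\ge\tfrac14\,n^{-1/\rho}\,3^{-(2n+1)d/\rho}\,\kappa^{1/\rho}\,L_0^{-\frac{2p^{(n)}+(2n+1)d}{\rho}},\qquad \tau_n>\frac{2p^{(n)}+(2n+1)d}{\rho}.$$ There exists $\bar L_0^*=\bar L_0^*(n,d,\kappa,\rho,M,\mathrm r_0,s_0^{(n)},r_n)$ such that if $L_0\ge\bar L_0^*$, then there is $\bar g_0^*=\bar g_0^*(n,d,M,\mathrm r_0,s_0^{(n)},\gamma)$ such that for all $|g|>\bar g_0^*$: if the cube $\Lambda^{(n)}_{L_0}(\mathbf u)$ is $(E,\gamma)$-Good, then it is $(E,\tfrac12)$-NS.
   Context: Setting. Fix $N\ge2$, $d\ge1$, $r>0$, $g\ne0$. Points of $\mathbb Z^{nd}$ are $\mathbf x=(x_1,\dots,x_n)$, $x_j\in\mathbb Z^d$, $\|x_j\|=\max_i|x_j^{(i)}|$, $\|\mathbf x\|=\max_j\|x_j\|$, $\langle\mathbf x\rangle=\max\{1,\|\mathbf x\|\}$. Operator $\mathbf H^{(n)}_\omega=\frac1g(\mathbf T+\mathbf U)+\mathbf V(\cdot,\omega)$ on $\ell^2(\mathbb Z^{nd})$: $\mathbf T(\mathbf x,\mathbf y)=\langle y_j-x_j\rangle^{-r}$ if there is $j$ with $x_i=y_i$ for all $i\ne j$, else $0$; $\mathbf U(\mathbf x)=\sum_{j_1<j_2}U(x_{j_1},x_{j_2})$, $U$ symmetric, $|U|\le M_1$, $U(x,x')=0$ if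 $\|x-x'\|\ge\mathrm r_0$ ($\mathrm r_0\ge1$); $\mathbf V(\mathbf x,\omega)=\sum_jV(x_j,\omega)$, $V(x,\omega)$ i.i.d. with distribution $\mu$, $\operatorname{supp}\mu\subset[-M,M]$, Hölder continuous of order $\rho>0$ with $\mathcal K_\rho(\mu)>0$ (where $1/\mathcal K_\rho(\mu)=\inf_{\kappa>0}\sup_{0<|a-b|\le\kappa}|a-b|^{-\rho}\mu([a,b])$), and $\kappa\in(0,\mathcal K_\rho(\mu))$ fixed. Cubes $\Lambda^{(n)}_L(\mathbf u)=\{\mathbf x:\|\mathbf x-\mathbf u\|\le L\}$; $\mathbf H^{(n)}_\Lambda$ = restriction to $\Lambda$, $\mathbf G^{(n)}_\Lambda(E)=(\mathbf H^{(n)}_\Lambda-E)^{-1}$. Sobolev norm of a matrix $\mathcal M$ on $X\times Y$: $\|\mathcal M\|_s^2=C_0\sum_{\mathbf v\in X-Y}(\sup_{\mathbf x-\mathbf y=\mathbf v}|\mathcal M(\mathbf x,\mathbf y)|)^2\langle\mathbf v\rangle^{2s}$, $C_0=C_0(s_0^{(n)})>0$ fixed. With $\tau_n\ge0$, $nd/2<s_0^{(n)}\le r_n<r-nd/2$: $\Lambda^{(n)}_L(\mathbf u)$ is $(E,\tfrac12)$-NS if $\mathbf G^{(n)}_{\Lambda^{(n)}_L(\mathbf u)}(E)$ exists and $\|\mathbf G^{(n)}_{\Lambda^{(n)}_L(\mathbf u)}(E)\|_s\le L^{\tau_n+s/2}$ for all $s\in[s_0^{(n)},r_n]$. Parameters: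 $I=[-MN-1,MN+1]$, $p^{(n)}=18^{N-n}p_0$, $p_0\ge20Nd$. For $E\in I$, $\gamma>0$, an $n$-particle cube $\Lambda^{(n)}_L(\mathbf u)$ is $(E,\gamma)$-Good if $\min_{\mathbf x\in\Lambda^{(n)}_L(\mathbf u)}|\mathbf V(\mathbf x,\omega)-E|>\gamma$. *)

theory Defs
  imports "HOL-Probability.Probability_Measure"
begin

text \<open>Points of Z^d are int lists of length d; n-particle configurations
  (points of Z^(nd)) are lists of n such lists.\<close>

definition pnorm :: "int list \<Rightarrow> int" where
  "pnorm xs = Max (insert 0 (abs ` set xs))"

definition cnorm :: "int list list \<Rightarrow> int" where
  "cnorm x = Max (insert 0 (pnorm ` set x))"

definition pbr :: "int list \<Rightarrow> real" where
  "pbr v = real_of_int (max 1 (pnorm v))"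

definition cbr :: "int list list \<Rightarrow> real" where
  "cbr v = real_of_int (max 1 (cnorm v))"

definition pdiff :: "int list \<Rightarrow> int list \<Rightarrow> int list" where
  "pdiff a b = map2 (-) a b"

definition cdiff :: "int list list \<Rightarrow> int list list \<Rightarrow> int list list" where
  "cdiff x y = map2 pdiff x y"

definition is_config :: "nat \<Rightarrow> nat \<Rightarrow> int list list \<Rightarrow> bool" where
  "is_config n d x \<longleftrightarrow> length x = n \<and> (\<forall>xj\<in>set x. length xj = d)"

definition cube :: "nat \<Rightarrow> nat \<Rightarrow> real \<Rightarrow> int list list \<Rightarrow> int list list set" where
  "cube n d L u = {x. is_config n d x \<and> real_of_int (cnorm (cdiff x u)) \<le> L}"

definition diff_index :: "int list list \<Rightarrow> int list list \<Rightarrow> nat" where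
  "diff_index x y = (THE j. j < length x \<and> x ! j \<noteq> y ! j)"

definition kinT :: "real \<Rightarrow> int list list \<Rightarrow> int list list \<Rightarrow> real" where
  "kinT r x y =
     (if \<exists>j<length x. \<forall>i<length x. i \<noteq> j \<longrightarrow> x ! i = y ! i then
        (if x = y then 1
         else pbr (pdiff (y ! diff_index x y) (x ! diff_index x y)) powr (- r))
      else 0)"

definition intU :: "(int list \<Rightarrow> int list \<Rightarrow> real) \<Rightarrow> int list list \<Rightarrow> real" where
  "intU U x = (\<Sum>j2<length x. \<Sum>j1<j2. U (x ! j1) (x ! j2))"

definition potV :: "(int list \<Rightarrow> real) \<Rightarrow> int list list \<Rightarrow> real" where
  "potV V x = (\<Sum>j<length x. V (x ! j))"

definition Hop :: "real \<Rightarrow> real \<Rightarrow> (int list \<Rightarrow> int list \<Rightarrow> real) \<Rightarrow> (int list \<Rightarrow> real)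
    \<Rightarrow> int list list \<Rightarrow> int list list \<Rightarrow> real" where
  "Hop g r U V x y = (1 / g) * (kinT r x y + (if x = y then intU U x else 0))
                      + (if x = y then potV V x else 0)"

definition is_inverse_on :: "'a set \<Rightarrow> ('a \<Rightarrow> 'a \<Rightarrow> real) \<Rightarrow> ('a \<Rightarrow> 'a \<Rightarrow> real) \<Rightarrow> bool" where
  "is_inverse_on X A G \<longleftrightarrow>
     (\<forall>x\<in>X. \<forall>y\<in>X. (\<Sum>z\<in>X. A x z * G z y) = (if x = y then 1 else 0)) \<and>
     (\<forall>x\<in>X. \<forall>y\<in>X. (\<Sum>z\<in>X. G x z * A z y) = (if x = y then 1 else 0))"

definition diffset :: "int list list set \<Rightarrow> int list list set \<Rightarrow> int list list set" where
  "diffset X Y = {cdiff x y | x y. x \<in> X \<and> y \<in> Y}"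

definition sob_norm :: "real \<Rightarrow> int list list set \<Rightarrow> int list list set
    \<Rightarrow> (int list list \<Rightarrow> int list list \<Rightarrow> real) \<Rightarrow> real \<Rightarrow> real" where
  "sob_norm C0 X Y A s = sqrt (C0 * (\<Sum>v\<in>diffset X Y.
      (Max {\<bar>A x y\<bar> | x y. x \<in> X \<and> y \<in> Y \<and> cdiff x y = v})\<^sup>2 * cbr v powr (2 * s)))"

definition NS :: "nat \<Rightarrow> nat \<Rightarrow> real \<Rightarrow> real \<Rightarrow> real \<Rightarrow> real \<Rightarrow> real \<Rightarrow> real
    \<Rightarrow> (int list \<Rightarrow> int list \<Rightarrow> real) \<Rightarrow> (int list \<Rightarrow> real) \<Rightarrow> real \<Rightarrow> real \<Rightarrow> int list list \<Rightarrow> bool" where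
  "NS n d C0 \<tau> s0 rn g r U V E L u \<longleftrightarrow>
     (\<exists>G. is_inverse_on (cube n d L u) (\<lambda>x y. Hop g r U V x y - (if x = y then E else 0)) G \<and>
          (\<forall>s\<in>{s0..rn}. sob_norm C0 (cube n d L u) (cube n d L u) G s \<le> L powr (\<tau> + s / 2)))"

definition Good :: "nat \<Rightarrow> nat \<Rightarrow> (int list \<Rightarrow> real) \<Rightarrow> real \<Rightarrow> real \<Rightarrow> real \<Rightarrow> int list list \<Rightarrow> bool" where
  "Good n d V E \<gamma> L u \<longleftrightarrow> (\<forall>x\<in>cube n d L u. \<bar>potV V x - E\<bar> > \<gamma>)"

definition holder_const :: "real measure \<Rightarrow> real \<Rightarrow> ereal" where
  "holder_const \<mu> \<rho> = inverse (INF k\<in>{0<..}. SUP ab\<in>{(a, b). a < b \<and> b - a \<le> k}.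
      ereal ((snd ab - fst ab) powr (- \<rho>) * measure \<mu> {fst ab..snd ab}))"

end

theory Submission
  imports Defs "Jordan_Normal_Form.Determinant"
begin

(* On an (E,gamma)-Good cube the diagonal part V - E of H - E has modulus at least gamma,
   while the remaining part (T + U)/g has entries of size O(1/|g|) on a cube with a bounded
   number of sites.  For |g| large H - E is therefore strictly diagonally dominant, hence
   invertible, and its inverse differs from the diagonal matrix 1/(V - E) by O(1/(|g| gamma^2))
   in every entry.  Consequently the Sobolev norm of the inverse is at most sqrt(5 C0)/gamma:
   the diagonal contributes at most (2/gamma)^2, the off-diagonal entries at most 1/gamma^2
   once |g| beats the sum of the Sobolev weights.  Finally the assumed lower bound
   gamma >= c L0^(-e) with tau > e gives sqrt(5 C0)/gamma <= L0^tau for L0 large. *)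

lemma cnorm_le_iff:
  "cnorm w \<le> c \<longleftrightarrow> 0 \<le> c \<and> (\<forall>j<length w. \<forall>i<length (w!j). \<bar>w!j!i\<bar> \<le> c)"
proof -
  have pnorm_le: "pnorm xs \<le> c \<longleftrightarrow> 0 \<le> c \<and> (\<forall>i<length xs. \<bar>xs!i\<bar> \<le> c)" for xs
    unfolding pnorm_def by (auto simp: in_set_conv_nth) (metis nth_mem)
  show ?thesis
    unfolding cnorm_def by (auto simp: in_set_conv_nth pnorm_le) (metis nth_mem)+
qed

lemma cnorm_nonneg: "0 \<le> cnorm w"
  using cnorm_le_iff by (metis order_refl)

lemma abs_nth_nth_le_cnorm: "j < length w \<Longrightarrow> i < length (w!j) \<Longrightarrow> \<bar>w!j!i\<bar> \<le> cnorm w"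
  using cnorm_le_iff[of w "cnorm w"] by auto

lemma is_config_eqI:
  "is_config n d x \<Longrightarrow> is_config n d y \<Longrightarrow> (\<And>j i. j < n \<Longrightarrow> i < d \<Longrightarrow> x!j!i = y!j!i) \<Longrightarrow> x = y"
  unfolding is_config_def by (intro nth_equalityI) (auto intro!: nth_equalityI)

lemma is_config_cdiff: "is_config n d x \<Longrightarrow> is_config n d y \<Longrightarrow> is_config n d (cdiff x y)"
  unfolding is_config_def cdiff_def pdiff_def by (auto simp: in_set_conv_nth) (metis nth_mem min.idem)

lemma cdiff_nth_nth:
  "is_config n d x \<Longrightarrow> is_config n d y \<Longrightarrow> j < n \<Longrightarrow> i < d \<Longrightarrow> cdiff x y ! j ! i = x!j!i - y!j!i"
  unfolding is_config_def cdiff_def pdiff_def by auto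

lemma cdiff_right_cancel:
  assumes "is_config n d x" "is_config n d y" "is_config n d u" "cdiff x u = cdiff y u"
  shows "x = y"
proof (rule is_config_eqI[OF assms(1,2)])
  fix j i assume "j < n" "i < d"
  then show "x!j!i = y!j!i"
    using assms(4) cdiff_nth_nth[OF assms(1,3)] cdiff_nth_nth[OF assms(2,3)] by force
qed

lemma cnorm_cdiff_triangle:
  assumes "is_config n d x" "is_config n d y" "is_config n d u"
  shows "cnorm (cdiff x y) \<le> cnorm (cdiff x u) + cnorm (cdiff y u)"
  unfolding cnorm_le_iff
proof (intro conjI allI impI)
  show "0 \<le> cnorm (cdiff x u) + cnorm (cdiff y u)"
    using cnorm_nonneg by (simp add: add_nonneg_nonneg)
  fix j i assume ji: "j < length (cdiff x y)" "i < length (cdiff x y ! j)"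
  have c: "is_config n d (cdiff x y)" "is_config n d (cdiff x u)" "is_config n d (cdiff y u)"
    using assms is_config_cdiff by auto
  then have jn: "j < n" and id: "i < d"
    using ji unfolding is_config_def by auto
  have "cdiff x y ! j ! i = cdiff x u ! j ! i - cdiff y u ! j ! i"
    using assms jn id by (simp add: cdiff_nth_nth)
  moreover have "\<bar>cdiff x u ! j ! i\<bar> \<le> cnorm (cdiff x u)" "\<bar>cdiff y u ! j ! i\<bar> \<le> cnorm (cdiff y u)"
    using c jn id unfolding is_config_def by (auto intro!: abs_nth_nth_le_cnorm)
  ultimately show "\<bar>cdiff x y ! j ! i\<bar> \<le> cnorm (cdiff x u) + cnorm (cdiff y u)"
    by linarith
qed

definition zero_config :: "nat \<Rightarrow> nat \<Rightarrow> int list list" where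
  "zero_config n d = replicate n (replicate d 0)"

lemma is_config_zero_config: "is_config n d (zero_config n d)"
  unfolding is_config_def zero_config_def by auto

lemma cdiff_eq_zero_config_iff:
  assumes "is_config n d x" "is_config n d y"
  shows "cdiff x y = zero_config n d \<longleftrightarrow> x = y"
proof
  assume xy: "cdiff x y = zero_config n d"
  show "x = y"
  proof (rule is_config_eqI[OF assms])
    fix j i assume "j < n" "i < d"
    then show "x!j!i = y!j!i"
      using cdiff_nth_nth[OF assms] xy by (simp add: zero_config_def)
  qed
next
  assume "x = y"
  then show "cdiff x y = zero_config n d"
    using assms by (intro is_config_eqI[OF is_config_cdiff is_config_zero_config])
      (auto simp: cdiff_nth_nth zero_config_def)
qed

lemma cbr_zero_config: "cbr (zero_config n d) = 1"
proof -
  have "cnorm (zero_config n d) \<le> 0"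
    unfolding cnorm_le_iff zero_config_def by auto
  then show ?thesis
    unfolding cbr_def using cnorm_nonneg[of "zero_config n d"] by simp
qed

lemma cbr_ge_one: "1 \<le> cbr v"
  unfolding cbr_def by simp

definition confs_within :: "nat \<Rightarrow> nat \<Rightarrow> real \<Rightarrow> int list list set" where
  "confs_within n d c = {w. is_config n d w \<and> real_of_int (cnorm w) \<le> c}"

lemma finite_confs_within: "finite (confs_within n d c)"
proof -
  define K where "K = \<lceil>c\<rceil>"
  define T where "T = {a :: int list. set a \<subseteq> {-K..K} \<and> length a = d}"
  have "finite T"
    unfolding T_def by (rule finite_lists_length_eq) simp
  moreover have "confs_within n d c \<subseteq> {w. set w \<subseteq> T \<and> length w = n}"
  proof
    fix w assume "w \<in> confs_within n d c"
    then have w: "is_config n d w" "cnorm w \<le> K"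
      unfolding confs_within_def K_def by (auto simp: le_ceiling_iff)
    then have "\<forall>a\<in>set w. \<forall>z\<in>set a. \<bar>z\<bar> \<le> K"
      unfolding cnorm_le_iff by (auto simp: in_set_conv_nth)
    then have "set w \<subseteq> T"
      using w(1) unfolding T_def is_config_def by (fastforce simp: abs_le_iff)
    then show "w \<in> {w. set w \<subseteq> T \<and> length w = n}"
      using w(1) unfolding is_config_def by simp
  qed
  ultimately show ?thesis
    using finite_lists_length_eq finite_subset by blast
qed

lemma cdiff_cube_subset:
  assumes "is_config n d u"
  shows "(\<lambda>x. cdiff x u) ` cube n d L u \<subseteq> confs_within n d L"
  using assms is_config_cdiff unfolding cube_def confs_within_def by auto

lemma inj_on_cdiff_cube:
  assumes "is_config n d u"
  shows "inj_on (\<lambda>x. cdiff x u) (cube n d L u)"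
  using assms cdiff_right_cancel unfolding cube_def inj_on_def by blast

lemma finite_cube: "is_config n d u \<Longrightarrow> finite (cube n d L u)"
  using finite_imageD finite_subset cdiff_cube_subset inj_on_cdiff_cube finite_confs_within
  by metis

lemma card_cube_le: "is_config n d u \<Longrightarrow> card (cube n d L u) \<le> card (confs_within n d L)"
  using card_inj_on_le cdiff_cube_subset inj_on_cdiff_cube finite_confs_within by metis

lemma diffset_cube_subset:
  assumes "is_config n d u"
  shows "diffset (cube n d L u) (cube n d L u) \<subseteq> confs_within n d (2 * L)"
proof
  fix v assume "v \<in> diffset (cube n d L u) (cube n d L u)"
  then obtain x y where x: "is_config n d x" "cnorm (cdiff x u) \<le> L"
    and y: "is_config n d y" "cnorm (cdiff y u) \<le> L" and v: "v = cdiff x y"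
    unfolding diffset_def cube_def by auto
  have "cnorm v \<le> cnorm (cdiff x u) + cnorm (cdiff y u)"
    using cnorm_cdiff_triangle[OF x(1) y(1) assms] v by simp
  then have "cnorm v \<le> 2 * L"
    using x(2) y(2) by linarith
  then show "v \<in> confs_within n d (2 * L)"
    unfolding confs_within_def v using is_config_cdiff[OF x(1) y(1)] by simp
qed

lemma sum_diag_add_mult:
  fixes P v :: "'a \<Rightarrow> real"
  assumes "finite X" "x \<in> X"
  shows "(\<Sum>z\<in>X. ((if x = z then a else 0) + P z) * v z) = a * v x + (\<Sum>z\<in>X. P z * v z)"
  using assms by (simp add: distrib_right sum.distrib if_distrib[of "\<lambda>t. t * v _"] cong: if_cong)

lemma diag_dominant_row_bound:
  fixes p v :: "'a \<Rightarrow> real"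
  assumes "finite X" "0 < \<gamma>" "\<gamma> \<le> \<bar>a\<bar>" "(\<Sum>z\<in>X. \<bar>p z\<bar>) \<le> \<eta>"
    and "0 \<le> m" "\<forall>z\<in>X. \<bar>v z\<bar> \<le> m"
    and "a * c + (\<Sum>z\<in>X. p z * v z) = w"
  shows "\<gamma> * \<bar>c - w / a\<bar> \<le> \<eta> * m"
proof -
  have "a \<noteq> 0"
    using assms(2,3) by auto
  then have "a * (c - w / a) = - (\<Sum>z\<in>X. p z * v z)"
    using assms(7) by (auto simp: algebra_simps)
  then have "\<bar>a\<bar> * \<bar>c - w / a\<bar> = \<bar>\<Sum>z\<in>X. p z * v z\<bar>"
    by (metis abs_minus_cancel abs_mult)
  also have "\<dots> \<le> (\<Sum>z\<in>X. \<bar>p z\<bar> * m)"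
    using assms(6) by (intro order_trans[OF sum_abs] sum_mono) (auto simp: abs_mult intro!: mult_left_mono)
  also have "\<dots> \<le> \<eta> * m"
    using assms(4,5) by (simp add: sum_distrib_right[symmetric] mult_right_mono)
  finally show ?thesis
    using assms(3) by (meson abs_ge_zero mult_right_mono order_trans)
qed

lemma diag_dominant_sup_bound:
  fixes D w v :: "'a \<Rightarrow> real" and P :: "'a \<Rightarrow> 'a \<Rightarrow> real"
  assumes "finite X" "0 < \<gamma>" "\<forall>x\<in>X. \<gamma> \<le> \<bar>D x\<bar>" "\<forall>x\<in>X. (\<Sum>z\<in>X. \<bar>P x z\<bar>) \<le> \<eta>" "\<eta> \<le> \<gamma> / 2"
    and "\<forall>x\<in>X. D x * v x + (\<Sum>z\<in>X. P x z * v z) = w x"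
    and "\<forall>x\<in>X. \<bar>w x\<bar> \<le> b"
  shows "\<forall>x\<in>X. \<bar>v x\<bar> \<le> 2 * b / \<gamma>"
proof (cases "X = {}")
  case False
  define m where "m = Max ((\<lambda>z. \<bar>v z\<bar>) ` X)"
  have vm: "\<forall>z\<in>X. \<bar>v z\<bar> \<le> m"
    unfolding m_def using assms(1) by simp
  have "m \<in> (\<lambda>z. \<bar>v z\<bar>) ` X"
    unfolding m_def using assms(1) False by (intro Max_in) auto
  then obtain x where x: "x \<in> X" "\<bar>v x\<bar> = m"
    by auto
  have "\<gamma> * \<bar>v x - w x / D x\<bar> \<le> \<eta> * m"
    using x assms vm by (intro diag_dominant_row_bound[of X]) auto
  moreover have "\<eta> * m \<le> \<gamma> / 2 * m"
    using assms(5) x by (intro mult_right_mono) auto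
  moreover have "\<gamma> * \<bar>w x / D x\<bar> \<le> b"
  proof -
    have "\<gamma> * \<bar>w x\<bar> \<le> \<bar>D x\<bar> * b"
      using assms(2,3,7) x(1) by (intro mult_mono) auto
    moreover have "0 < \<bar>D x\<bar>"
      using assms(2,3) x(1) by fastforce
    ultimately show ?thesis
      by (simp add: abs_divide pos_divide_le_eq mult.commute)
  qed
  moreover have "\<gamma> * m \<le> \<gamma> * \<bar>v x - w x / D x\<bar> + \<gamma> * \<bar>w x / D x\<bar>"
  proof -
    have "m \<le> \<bar>v x - w x / D x\<bar> + \<bar>w x / D x\<bar>"
      using x(2) abs_triangle_ineq[of "v x - w x / D x" "w x / D x"] by simp
    then show ?thesis
      using mult_left_mono[of _ _ \<gamma>] assms(2) by (fastforce simp: distrib_left)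
  qed
  ultimately have "\<gamma> * m \<le> 2 * b"
    by linarith
  show ?thesis
  proof
    fix z assume "z \<in> X"
    then have "\<gamma> * \<bar>v z\<bar> \<le> 2 * b"
      using vm \<open>\<gamma> * m \<le> 2 * b\<close> assms(2) by (meson mult_left_mono less_imp_le order_trans)
    then show "\<bar>v z\<bar> \<le> 2 * b / \<gamma>"
      using assms(2) by (simp add: pos_le_divide_eq mult.commute)
  qed
qed simp

lemma inverse_on_if_det_nonzero:
  fixes A :: "'a \<Rightarrow> 'a \<Rightarrow> real"
  assumes h: "bij_betw h {0..<k} X" and "det (mat k k (\<lambda>(i, j). A (h i) (h j))) \<noteq> 0"
  shows "\<exists>G. is_inverse_on X A G"
proof -
  define M where "M = mat k k (\<lambda>(i, j). A (h i) (h j))"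
  define hi where "hi = inv_into {0..<k} h"
  have hi: "x \<in> X \<Longrightarrow> h (hi x) = x" "x \<in> X \<Longrightarrow> hi x < k" for x
    using h unfolding hi_def by (auto simp: bij_betw_inv_into_right bij_betw_def)
  have hi_eq: "x \<in> X \<Longrightarrow> y \<in> X \<Longrightarrow> hi x = hi y \<longleftrightarrow> x = y" for x y
    using hi(1) by metis
  have reindex: "(\<Sum>z\<in>X. f z) = (\<Sum>l<k. f (h l))" for f :: "'a \<Rightarrow> real"
    using sum.reindex_bij_betw[OF h, of f] by (simp add: lessThan_atLeast0)
  have M: "M \<in> carrier_mat k k"
    unfolding M_def by simp
  define B where "B = adj_mat M"
  have B: "M * B = det M \<cdot>\<^sub>m 1\<^sub>m k" "B * M = det M \<cdot>\<^sub>m 1\<^sub>m k" "B \<in> carrier_mat k k"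
    using adj_mat[OF M] B_def by auto
  define G where "G x y = B $$ (hi x, hi y) / det M" for x y
  have "is_inverse_on X A G"
    unfolding is_inverse_on_def
  proof (intro conjI ballI)
    fix x y assume xy: "x \<in> X" "y \<in> X"
    have "(\<Sum>z\<in>X. A x z * G z y) = (M * B) $$ (hi x, hi y) / det M"
      using xy hi M B(3) h
      by (simp add: reindex G_def M_def scalar_prod_def sum_divide_distrib lessThan_atLeast0
          bij_betw_inv_into_left hi_def)
    then show "(\<Sum>z\<in>X. A x z * G z y) = (if x = y then 1 else 0)"
      using B(1) xy hi hi_eq assms(2) unfolding M_def[symmetric] by simp
    have "(\<Sum>z\<in>X. G x z * A z y) = (B * M) $$ (hi x, hi y) / det M"
      using xy hi M B(3) h
      by (simp add: reindex G_def M_def scalar_prod_def sum_divide_distrib lessThan_atLeast0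
          bij_betw_inv_into_left hi_def)
    then show "(\<Sum>z\<in>X. G x z * A z y) = (if x = y then 1 else 0)"
      using B(2) xy hi hi_eq assms(2) unfolding M_def[symmetric] by simp
  qed
  then show ?thesis
    by blast
qed

lemma inverse_on_exists:
  fixes A :: "'a \<Rightarrow> 'a \<Rightarrow> real"
  assumes "finite X"
    and kernel: "\<And>v. \<forall>x\<in>X. (\<Sum>z\<in>X. A x z * v z) = 0 \<Longrightarrow> \<forall>x\<in>X. v x = 0"
  shows "\<exists>G. is_inverse_on X A G"
proof -
  define k where "k = card X"
  obtain h where h: "bij_betw h {0..<k} X"
    using ex_bij_betw_nat_finite[OF assms(1)] k_def by blast
  define hi where "hi = inv_into {0..<k} h"
  have hi: "x \<in> X \<Longrightarrow> h (hi x) = x" "x \<in> X \<Longrightarrow> hi x < k" for x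
    using h unfolding hi_def by (auto simp: bij_betw_inv_into_right bij_betw_def)
  have reindex: "(\<Sum>z\<in>X. f z) = (\<Sum>l<k. f (h l))" for f :: "'a \<Rightarrow> real"
    using sum.reindex_bij_betw[OF h, of f] by (simp add: lessThan_atLeast0)
  define M where "M = mat k k (\<lambda>(i, j). A (h i) (h j))"
  have M: "M \<in> carrier_mat k k"
    unfolding M_def by simp
  have "det M \<noteq> 0"
  proof
    assume "det M = 0"
    then obtain v where v: "v \<in> carrier_vec k" "v \<noteq> 0\<^sub>v k" "M *\<^sub>v v = 0\<^sub>v k"
      using det_0_iff_vec_prod_zero_field[OF M] by blast
    have "\<forall>x\<in>X. (\<Sum>z\<in>X. A x z * v $ hi z) = 0"
    proof
      fix x assume "x \<in> X"
      then have "(M *\<^sub>v v) $ hi x = 0"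
        using v(3) hi by simp
      then show "(\<Sum>z\<in>X. A x z * v $ hi z) = 0"
        using \<open>x \<in> X\<close> h hi v(1) unfolding reindex
        by (simp add: M_def scalar_prod_def lessThan_atLeast0 bij_betw_inv_into_left hi_def)
    qed
    then have "\<forall>x\<in>X. v $ hi x = 0"
      by (rule kernel)
    then have "v $ i = 0" if "i < k" for i
      using bij_betw_inv_into_left[OF h] bij_betw_apply[OF h] that unfolding hi_def by force
    then have "v = 0\<^sub>v k"
      using v(1) by (intro eq_vecI) auto
    then show False
      using v(2) by simp
  qed
  then show ?thesis
    using inverse_on_if_det_nonzero[OF h] unfolding M_def by blast
qed

lemma diag_dominant_inverse_exists:
  fixes D :: "'a \<Rightarrow> real" and P :: "'a \<Rightarrow> 'a \<Rightarrow> real"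
  assumes "finite X" "0 < \<gamma>" "\<forall>x\<in>X. \<gamma> \<le> \<bar>D x\<bar>" "\<forall>x\<in>X. (\<Sum>z\<in>X. \<bar>P x z\<bar>) \<le> \<eta>" "\<eta> \<le> \<gamma> / 2"
  shows "\<exists>G. is_inverse_on X (\<lambda>x y. (if x = y then D x else 0) + P x y) G"
proof (rule inverse_on_exists[OF assms(1)])
  fix v :: "'a \<Rightarrow> real"
  assume "\<forall>x\<in>X. (\<Sum>z\<in>X. ((if x = z then D x else 0) + P x z) * v z) = 0"
  then have "\<forall>x\<in>X. D x * v x + (\<Sum>z\<in>X. P x z * v z) = 0"
    using assms(1) by (simp add: sum_diag_add_mult)
  then have "\<forall>x\<in>X. \<bar>v x\<bar> \<le> 2 * 0 / \<gamma>"
    using assms by (intro diag_dominant_sup_bound[where w = "\<lambda>_. 0"]) auto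
  then show "\<forall>x\<in>X. v x = 0"
    by simp
qed

lemma diag_dominant_inverse_approx:
  fixes D :: "'a \<Rightarrow> real" and P G :: "'a \<Rightarrow> 'a \<Rightarrow> real"
  assumes "finite X" "0 < \<gamma>" "\<forall>x\<in>X. \<gamma> \<le> \<bar>D x\<bar>" "\<forall>x\<in>X. (\<Sum>z\<in>X. \<bar>P x z\<bar>) \<le> \<eta>" "\<eta> \<le> \<gamma> / 2"
    and "is_inverse_on X (\<lambda>x y. (if x = y then D x else 0) + P x y) G"
    and "x \<in> X" "y \<in> X"
  shows "\<bar>G x y - (if x = y then 1 / D x else 0)\<bar> \<le> 2 * \<eta> / \<gamma>\<^sup>2"
proof -
  have column: "\<forall>x\<in>X. D x * G x y + (\<Sum>z\<in>X. P x z * G z y) = (if x = y then 1 else 0)"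
    using assms(1,6,8) unfolding is_inverse_on_def by (simp add: sum_diag_add_mult)
  have "\<forall>z\<in>X. \<bar>G z y\<bar> \<le> 2 * 1 / \<gamma>"
    using assms(1-5) column by (intro diag_dominant_sup_bound[where w = "\<lambda>x. if x = y then 1 else 0"]) auto
  then have "\<gamma> * \<bar>G x y - (if x = y then 1 else 0) / D x\<bar> \<le> \<eta> * (2 / \<gamma>)"
    using assms column by (intro diag_dominant_row_bound[of X]) auto
  then have "\<gamma> * \<bar>G x y - (if x = y then 1 / D x else 0)\<bar> \<le> \<eta> * (2 / \<gamma>)"
    by (cases "x = y") simp_all
  then have "\<bar>G x y - (if x = y then 1 / D x else 0)\<bar> \<le> \<eta> * (2 / \<gamma>) / \<gamma>"
    by (simp only: pos_le_divide_eq[OF assms(2)] mult.commute)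
  also have "\<dots> = 2 * \<eta> / \<gamma>\<^sup>2"
    by (simp add: power2_eq_square)
  finally show ?thesis .
qed

lemma sob_norm_summand_le:
  assumes "finite X" "\<forall>x\<in>X. is_config n d x"
    and diag: "\<forall>x\<in>X. \<forall>y\<in>X. \<bar>G x y\<bar> \<le> a"
    and offdiag: "\<forall>x\<in>X. \<forall>y\<in>X. x \<noteq> y \<longrightarrow> \<bar>G x y\<bar> \<le> b"
    and "s \<le> t" "v \<in> diffset X X"
  shows "(Max {\<bar>G x y\<bar> | x y. x \<in> X \<and> y \<in> X \<and> cdiff x y = v})\<^sup>2 * cbr v powr (2 * s)
           \<le> (if v = zero_config n d then a\<^sup>2 else 0) + b\<^sup>2 * cbr v powr (2 * t)"
proof -
  define Q where "Q = {\<bar>G x y\<bar> | x y. x \<in> X \<and> y \<in> X \<and> cdiff x y = v}"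
  have "finite Q"
    by (rule finite_subset[of _ "(\<lambda>(x, y). \<bar>G x y\<bar>) ` (X \<times> X)"]) (auto simp: Q_def assms(1))
  obtain x y where "x \<in> X" "y \<in> X" "cdiff x y = v"
    using assms(6) unfolding diffset_def by blast
  then have "\<bar>G x y\<bar> \<in> Q"
    unfolding Q_def by blast
  then have Max_nonneg: "0 \<le> Max Q" and "Q \<noteq> {}"
    using \<open>finite Q\<close> by (auto intro: order_trans[OF abs_ge_zero Max_ge])
  have "(Max Q)\<^sup>2 * cbr v powr (2 * s) \<le> (if v = zero_config n d then a\<^sup>2 else 0) + b\<^sup>2 * cbr v powr (2 * t)"
  proof (cases "v = zero_config n d")
    case True
    have "Max Q \<le> a"
      using \<open>finite Q\<close> \<open>Q \<noteq> {}\<close> diag unfolding Q_def by (subst Max_le_iff) auto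
    then have "(Max Q)\<^sup>2 \<le> a\<^sup>2"
      using Max_nonneg by (rule power_mono)
    then show ?thesis
      using True by (simp add: cbr_zero_config add_increasing2)
  next
    case False
    have "\<forall>q\<in>Q. q \<le> b"
      using offdiag False assms(2) unfolding Q_def by (auto simp: cdiff_eq_zero_config_iff)
    then have "Max Q \<le> b"
      using \<open>finite Q\<close> \<open>Q \<noteq> {}\<close> by simp
    then have "(Max Q)\<^sup>2 \<le> b\<^sup>2"
      using Max_nonneg by (rule power_mono)
    moreover have "cbr v powr (2 * s) \<le> cbr v powr (2 * t)"
      using cbr_ge_one[of v] assms(5) by (intro powr_mono) auto
    ultimately have "(Max Q)\<^sup>2 * cbr v powr (2 * s) \<le> b\<^sup>2 * cbr v powr (2 * t)"
      by (rule mult_mono) auto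
    then show ?thesis
      using False by simp
  qed
  then show ?thesis
    unfolding Q_def .
qed

lemma sob_norm_le_diag_offdiag:
  assumes "finite S" "diffset X X \<subseteq> S" "finite X" "\<forall>x\<in>X. is_config n d x"
    and "\<forall>x\<in>X. \<forall>y\<in>X. \<bar>G x y\<bar> \<le> a"
    and "\<forall>x\<in>X. \<forall>y\<in>X. x \<noteq> y \<longrightarrow> \<bar>G x y\<bar> \<le> b"
    and "s \<le> t" "0 \<le> C"
  shows "sob_norm C X X G s \<le> sqrt (C * (a\<^sup>2 + b\<^sup>2 * (\<Sum>v\<in>S. cbr v powr (2 * t))))"
proof -
  define Q where "Q v = {\<bar>G x y\<bar> | x y. x \<in> X \<and> y \<in> X \<and> cdiff x y = v}" for v
  have "finite (diffset X X)"
    using assms(1,2) by (rule finite_subset[rotated])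
  have "(\<Sum>v\<in>diffset X X. (Max (Q v))\<^sup>2 * cbr v powr (2 * s))
      \<le> (\<Sum>v\<in>diffset X X. (if v = zero_config n d then a\<^sup>2 else 0) + b\<^sup>2 * cbr v powr (2 * t))"
    unfolding Q_def using assms(3-7) by (intro sum_mono sob_norm_summand_le)
  also have "\<dots> = (\<Sum>v\<in>diffset X X. (if v = zero_config n d then a\<^sup>2 else 0))
      + b\<^sup>2 * (\<Sum>v\<in>diffset X X. cbr v powr (2 * t))"
    by (simp only: sum.distrib sum_distrib_left)
  also have "(\<Sum>v\<in>diffset X X. (if v = zero_config n d then a\<^sup>2 else 0)) \<le> a\<^sup>2"
    using \<open>finite (diffset X X)\<close> by (simp add: sum.delta')
  also have "(\<Sum>v\<in>diffset X X. cbr v powr (2 * t)) \<le> (\<Sum>v\<in>S. cbr v powr (2 * t))"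
    using assms(1,2) by (rule sum_mono2) simp
  finally have "(\<Sum>v\<in>diffset X X. (Max (Q v))\<^sup>2 * cbr v powr (2 * s))
      \<le> a\<^sup>2 + b\<^sup>2 * (\<Sum>v\<in>S. cbr v powr (2 * t))"
    by (simp add: mult_left_mono)
  then show ?thesis
    unfolding sob_norm_def Q_def using assms(8) by (intro real_sqrt_le_mono mult_left_mono)
qed

lemma perturbed_weight_sum_le:
  fixes \<beta> W \<gamma> :: real
  assumes "0 < \<gamma>" "0 \<le> \<beta>" "0 \<le> W" "\<beta> * (1 + W) \<le> 1 / \<gamma>"
  shows "(1 / \<gamma> + \<beta>)\<^sup>2 + \<beta>\<^sup>2 * W \<le> (sqrt 5 / \<gamma>)\<^sup>2"
proof -
  have "\<beta> \<le> 1 / \<gamma>"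
    using assms(4) mult_nonneg_nonneg[OF assms(2,3)] by (simp add: algebra_simps)
  have "(1 / \<gamma> + \<beta>)\<^sup>2 + \<beta>\<^sup>2 * W \<le> (2 / \<gamma>)\<^sup>2 + (1 / \<gamma>)\<^sup>2"
  proof (rule add_mono)
    show "(1 / \<gamma> + \<beta>)\<^sup>2 \<le> (2 / \<gamma>)\<^sup>2"
      using assms(1,2) \<open>\<beta> \<le> 1 / \<gamma>\<close> by (intro power_mono) auto
    have "\<beta>\<^sup>2 * W \<le> (\<beta> * (1 + W))\<^sup>2"
      using assms(3) by (simp add: power_mult_distrib power2_eq_square algebra_simps)
    also have "\<dots> \<le> (1 / \<gamma>)\<^sup>2"
      using assms by (intro power_mono) auto
    finally show "\<beta>\<^sup>2 * W \<le> (1 / \<gamma>)\<^sup>2" .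
  qed
  also have "\<dots> = (sqrt 5 / \<gamma>)\<^sup>2"
    by (simp add: power_divide)
  finally show ?thesis .
qed

lemma diag_dominant_inverse_sob_norm_le:
  fixes D :: "int list list \<Rightarrow> real" and P :: "int list list \<Rightarrow> int list list \<Rightarrow> real"
    and S :: "int list list set" and t :: real
  defines "W \<equiv> \<Sum>v\<in>S. cbr v powr (2 * t)"
  assumes sites: "finite S" "diffset X X \<subseteq> S" "finite X" "\<forall>x\<in>X. is_config n d x"
    and dominant: "0 < \<gamma>" "\<forall>x\<in>X. \<gamma> \<le> \<bar>D x\<bar>" "\<forall>x\<in>X. (\<Sum>z\<in>X. \<bar>P x z\<bar>) \<le> \<eta>"
    and "0 \<le> \<eta>" and small: "2 * \<eta> * (1 + W) \<le> \<gamma>" and "0 \<le> C"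
  shows "\<exists>G. is_inverse_on X (\<lambda>x y. (if x = y then D x else 0) + P x y) G
           \<and> (\<forall>s\<le>t. sob_norm C X X G s \<le> sqrt (5 * C) / \<gamma>)"
proof -
  define \<beta> where "\<beta> = 2 * \<eta> / \<gamma>\<^sup>2"
  have "0 \<le> W"
    unfolding W_def by (simp add: sum_nonneg)
  then have "2 * \<eta> \<le> \<gamma>"
    using small mult_nonneg_nonneg[OF \<open>0 \<le> \<eta>\<close> \<open>0 \<le> W\<close>] by (simp add: algebra_simps)
  then obtain G where G: "is_inverse_on X (\<lambda>x y. (if x = y then D x else 0) + P x y) G"
    using diag_dominant_inverse_exists[OF sites(3) dominant] by auto
  have approx: "\<bar>G x y - (if x = y then 1 / D x else 0)\<bar> \<le> \<beta>" if "x \<in> X" "y \<in> X" for x y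
    unfolding \<beta>_def using diag_dominant_inverse_approx[OF sites(3) dominant _ G that] \<open>2 * \<eta> \<le> \<gamma>\<close>
    by simp
  have "0 \<le> \<beta>"
    unfolding \<beta>_def using \<open>0 \<le> \<eta>\<close> by simp
  have \<beta>W: "\<beta> * (1 + W) \<le> 1 / \<gamma>"
  proof -
    have "\<beta> * (1 + W) = 2 * \<eta> * (1 + W) / \<gamma>\<^sup>2"
      unfolding \<beta>_def by simp
    also have "\<dots> \<le> \<gamma> / \<gamma>\<^sup>2"
      using small by (simp add: divide_right_mono)
    also have "\<dots> = 1 / \<gamma>"
      using dominant(1) by (simp add: power2_eq_square)
    finally show ?thesis .
  qed
  have diag: "\<forall>x\<in>X. \<forall>y\<in>X. \<bar>G x y\<bar> \<le> 1 / \<gamma> + \<beta>"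
  proof (intro ballI)
    fix x y assume "x \<in> X" "y \<in> X"
    moreover have "\<bar>if x = y then 1 / D x else 0\<bar> \<le> 1 / \<gamma>"
      using dominant(1,2) \<open>x \<in> X\<close> by (auto simp: abs_divide intro: frac_le)
    ultimately show "\<bar>G x y\<bar> \<le> 1 / \<gamma> + \<beta>"
      using approx abs_triangle_ineq4[of "G x y" "if x = y then 1 / D x else 0"] by fastforce
  qed
  have offdiag: "\<forall>x\<in>X. \<forall>y\<in>X. x \<noteq> y \<longrightarrow> \<bar>G x y\<bar> \<le> \<beta>"
    using approx by fastforce
  have "sqrt (C * ((1 / \<gamma> + \<beta>)\<^sup>2 + \<beta>\<^sup>2 * W)) \<le> sqrt (C * (sqrt 5 / \<gamma>)\<^sup>2)"
    using perturbed_weight_sum_le[OF dominant(1) \<open>0 \<le> \<beta>\<close> \<open>0 \<le> W\<close> \<beta>W] \<open>0 \<le> C\<close>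
    by (intro real_sqrt_le_mono mult_left_mono)
  also have "\<dots> = sqrt (5 * C) / \<gamma>"
    using dominant(1) by (simp add: real_sqrt_mult)
  finally have "sqrt (C * ((1 / \<gamma> + \<beta>)\<^sup>2 + \<beta>\<^sup>2 * W)) \<le> sqrt (5 * C) / \<gamma>" .
  moreover have "sob_norm C X X G s \<le> sqrt (C * ((1 / \<gamma> + \<beta>)\<^sup>2 + \<beta>\<^sup>2 * W))" if "s \<le> t" for s
    unfolding W_def using sites diag offdiag that \<open>0 \<le> C\<close> by (rule sob_norm_le_diag_offdiag)
  ultimately show ?thesis
    using G by force
qed

lemma abs_kinT_le_one:
  assumes "0 \<le> r"
  shows "\<bar>kinT r x y\<bar> \<le> 1"
proof -
  have "pbr v powr (- r) \<le> 1" for v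
    using powr_mono[of "- r" 0 "pbr v"] assms by (simp add: pbr_def max_def)
  then show ?thesis
    unfolding kinT_def by auto
qed

lemma bound_nonneg_if_abs_le:
  "\<forall>a b. length a = d \<longrightarrow> length b = d \<longrightarrow> \<bar>U a b\<bar> \<le> M1 \<Longrightarrow> (0::real) \<le> M1"
  by (metis (full_types) abs_ge_zero length_replicate order_trans)

lemma abs_intU_le:
  assumes "is_config n d x" and U_bound: "\<forall>a b. length a = d \<longrightarrow> length b = d \<longrightarrow> \<bar>U a b\<bar> \<le> M1"
  shows "\<bar>intU U x\<bar> \<le> real n ^ 2 * M1"
proof -
  have "length x = n"
    using assms(1) unfolding is_config_def by simp
  have "0 \<le> M1"
    using U_bound by (rule bound_nonneg_if_abs_le)
  have term_le: "\<bar>U (x ! j1) (x ! j2)\<bar> \<le> M1" if "j1 < j2" "j2 < n" for j1 j2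
    using assms that unfolding is_config_def by simp
  have "\<bar>intU U x\<bar> \<le> (\<Sum>j2<n. \<Sum>j1<j2. \<bar>U (x ! j1) (x ! j2)\<bar>)"
    unfolding intU_def \<open>length x = n\<close> by (rule order_trans[OF sum_abs], rule sum_mono, rule sum_abs)
  also have "\<dots> \<le> (\<Sum>j2<n. \<Sum>j1<n. M1)"
    using \<open>0 \<le> M1\<close> by (intro sum_mono order_trans[OF sum_mono sum_mono2]) (auto intro: term_le)
  also have "\<dots> = real n ^ 2 * M1"
    by (simp add: power2_eq_square)
  finally show ?thesis .
qed

lemma Hop_minus_diag:
  "Hop g r U V x y - (if x = y then E else 0)
     = (if x = y then potV V x - E else 0) + (kinT r x y + (if x = y then intU U x else 0)) / g"
  unfolding Hop_def by simp

(* The factors bound, in turn, the Sobolev weights of all differences of two sites of a cube of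
   radius L, the number of its sites, and the entries of T + U. *)
definition coupling_threshold :: "nat \<Rightarrow> nat \<Rightarrow> real \<Rightarrow> real \<Rightarrow> real \<Rightarrow> real \<Rightarrow> real" where
  "coupling_threshold n d M1 t L \<gamma> =
     2 * (1 + (\<Sum>v\<in>confs_within n d (2 * L). cbr v powr (2 * t)))
       * real (card (confs_within n d L)) * (1 + real n ^ 2 * M1) / \<gamma>"

lemma cube_row_sum_interaction_le:
  assumes "0 \<le> r" and U_bound: "\<forall>a b. length a = d \<longrightarrow> length b = d \<longrightarrow> \<bar>U a b\<bar> \<le> M1"
    and "is_config n d u" "x \<in> cube n d L u"
  shows "(\<Sum>z\<in>cube n d L u. \<bar>(kinT r x z + (if x = z then intU U x else 0)) / g\<bar>)
           \<le> real (card (confs_within n d L)) * (1 + real n ^ 2 * M1) / \<bar>g\<bar>"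
proof -
  define K where "K = 1 + real n ^ 2 * M1"
  have "0 \<le> K"
    unfolding K_def using bound_nonneg_if_abs_le[OF U_bound] by simp
  have "\<bar>kinT r x z + (if x = z then intU U x else 0)\<bar> \<le> K" for z
    using abs_kinT_le_one[OF assms(1), of x z] abs_intU_le[of n d x U M1] assms(4) U_bound
    unfolding K_def cube_def by (auto intro: order_trans[OF abs_triangle_ineq])
  then have "\<bar>(kinT r x z + (if x = z then intU U x else 0)) / g\<bar> \<le> K / \<bar>g\<bar>" for z
    by (simp add: abs_divide divide_right_mono)
  then have "(\<Sum>z\<in>cube n d L u. \<bar>(kinT r x z + (if x = z then intU U x else 0)) / g\<bar>)
      \<le> real (card (cube n d L u)) * (K / \<bar>g\<bar>)"
    by (rule sum_bounded_above)
  also have "\<dots> \<le> real (card (confs_within n d L)) * (K / \<bar>g\<bar>)"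
    using card_cube_le[OF assms(3), of L] \<open>0 \<le> K\<close> by (intro mult_right_mono) auto
  finally show ?thesis
    unfolding K_def by simp
qed

lemma strong_coupling_Good_imp_NS:
  assumes "0 \<le> r" and U_bound: "\<forall>a b. length a = d \<longrightarrow> length b = d \<longrightarrow> \<bar>U a b\<bar> \<le> M1"
    and "0 < \<gamma>" "1 \<le> L" "0 \<le> s0" "0 \<le> C0" "sqrt (5 * C0) \<le> \<gamma> * L powr \<tau>"
  shows "\<exists>g0. \<forall>g. g \<noteq> 0 \<longrightarrow> \<bar>g\<bar> > g0 \<longrightarrow>
           (\<forall>E u V. is_config n d u \<longrightarrow> Good n d V E \<gamma> L u \<longrightarrow> NS n d C0 \<tau> s0 rn g r U V E L u)"
proof (intro exI[of _ "coupling_threshold n d M1 rn L \<gamma>"] allI impI)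
  fix g E u V
  assume "g \<noteq> 0" and g_large: "coupling_threshold n d M1 rn L \<gamma> < \<bar>g\<bar>"
    and u: "is_config n d u" and good: "Good n d V E \<gamma> L u"
  define X where "X = cube n d L u"
  define D where "D x = potV V x - E" for x
  define P where "P x z = (kinT r x z + (if x = z then intU U x else 0)) / g" for x z
  define W where "W = (\<Sum>v\<in>confs_within n d (2 * L). cbr v powr (2 * rn))"
  define \<eta> where "\<eta> = real (card (confs_within n d L)) * (1 + real n ^ 2 * M1) / \<bar>g\<bar>"
  have configs: "\<forall>x\<in>X. is_config n d x"
    unfolding X_def cube_def by simp
  have row_sums: "\<forall>x\<in>X. (\<Sum>z\<in>X. \<bar>P x z\<bar>) \<le> \<eta>"
    unfolding X_def P_def \<eta>_def using cube_row_sum_interaction_le[OF assms(1,2) u] by blast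
  have "2 * \<eta> * (1 + W) = coupling_threshold n d M1 rn L \<gamma> * \<gamma> / \<bar>g\<bar>"
    using assms(3) unfolding coupling_threshold_def \<eta>_def W_def by simp
  also have "\<dots> \<le> \<bar>g\<bar> * \<gamma> / \<bar>g\<bar>"
    using assms(3) g_large by (intro divide_right_mono mult_right_mono) auto
  finally have "2 * \<eta> * (1 + W) \<le> \<gamma>"
    using \<open>g \<noteq> 0\<close> by simp
  moreover have "\<forall>x\<in>X. \<gamma> \<le> \<bar>D x\<bar>"
    using good unfolding Good_def X_def D_def by (auto intro: less_imp_le)
  moreover have "0 \<le> \<eta>"
    unfolding \<eta>_def using bound_nonneg_if_abs_le[OF U_bound] by simp
  ultimately obtain G where
      G: "is_inverse_on X (\<lambda>x y. (if x = y then D x else 0) + P x y) G"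
      and G_norm: "\<forall>s\<le>rn. sob_norm C0 X X G s \<le> sqrt (5 * C0) / \<gamma>"
    using diag_dominant_inverse_sob_norm_le[OF finite_confs_within diffset_cube_subset[OF u]
        finite_cube[OF u] configs[unfolded X_def] assms(3), where t = rn and C = C0]
      assms(6) row_sums unfolding X_def W_def by blast
  have "sob_norm C0 X X G s \<le> L powr (\<tau> + s / 2)" if "s \<in> {s0..rn}" for s
  proof -
    have "sob_norm C0 X X G s \<le> sqrt (5 * C0) / \<gamma>"
      using G_norm that by simp
    also have "\<dots> \<le> L powr \<tau>"
      using assms(3,7) by (simp add: divide_le_eq mult.commute)
    also have "\<dots> \<le> L powr (\<tau> + s / 2)"
      using assms(4,5) that by (intro powr_mono) auto
    finally show ?thesis .
  qed
  then show "NS n d C0 \<tau> s0 rn g r U V E L u"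
    unfolding NS_def Hop_minus_diag X_def[symmetric] D_def[symmetric] P_def[symmetric]
    using G by blast
qed

lemma large_scale_threshold:
  fixes b c e \<tau> :: real
  assumes "0 < c" "0 < \<tau> + e"
  shows "\<exists>L0. \<forall>L\<ge>L0. \<forall>\<gamma>. c * L powr e \<le> \<gamma> \<longrightarrow> 0 < \<gamma> \<and> 1 \<le> L \<and> b \<le> \<gamma> * L powr \<tau>"
proof (intro exI allI impI conjI)
  define L0 where "L0 = max 1 (b / c) powr (1 / (\<tau> + e))"
  have "1 \<le> L0"
    unfolding L0_def using assms(2) by (simp add: ge_one_powr_ge_zero)
  fix L \<gamma> assume "L0 \<le> L" and \<gamma>: "c * L powr e \<le> \<gamma>"
  then show "1 \<le> L"
    using \<open>1 \<le> L0\<close> by simp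
  then have "0 < c * L powr e"
    using assms(1) by simp
  then show "0 < \<gamma>"
    using \<gamma> by linarith
  have "max 1 (b / c) \<le> L powr (\<tau> + e)"
    using powr_mono2[of "\<tau> + e" L0 L] assms(2) \<open>1 \<le> L0\<close> \<open>L0 \<le> L\<close>
    unfolding L0_def by (simp add: powr_powr)
  then have "b \<le> c * L powr e * L powr \<tau>"
    using assms(1) \<open>1 \<le> L\<close> by (simp add: pos_divide_le_eq powr_add mult.commute mult.left_commute)
  also have "\<dots> \<le> \<gamma> * L powr \<tau>"
    using \<gamma> by (simp add: mult_right_mono)
  finally show "b \<le> \<gamma> * L powr \<tau>" .
qed

theorem lemma4p2:
  fixes N d n :: nat and r r0 M1 M \<kappa> \<rho> p0 \<tau> s0 rn C0 :: real
    and U :: "int list \<Rightarrow> int list \<Rightarrow> real" and \<mu> :: "real measure"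
  assumes "N \<ge> 2" and "d \<ge> 1" and "r > 0" and "r0 \<ge> 1"
    and "\<forall>x y. length x = d \<longrightarrow> length y = d \<longrightarrow> U x y = U y x"
    and "\<forall>x y. length x = d \<longrightarrow> length y = d \<longrightarrow> \<bar>U x y\<bar> \<le> M1"
    and "\<forall>x y. length x = d \<longrightarrow> length y = d \<longrightarrow> real_of_int (pnorm (pdiff x y)) \<ge> r0 \<longrightarrow> U x y = 0"
    and "prob_space \<mu>" and "sets \<mu> = sets borel" and "measure \<mu> {-M..M} = 1"
    and "\<rho> > 0" and "\<kappa> > 0" and "ereal \<kappa> < holder_const \<mu> \<rho>"
    and "p0 \<ge> 20 * real N * real d"
    and "1 \<le> n" and "n \<le> N"
    and "\<tau> \<ge> 0"
    and "\<tau> > (2 * (18 ^ (N - n) * p0) + (2 * real n + 1) * real d) / \<rho>"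
    and "real n * real d / 2 < s0" and "s0 \<le> rn" and "rn < r - real n * real d / 2"
    and "C0 > 0"
  shows "\<exists>L0s. \<forall>L0 \<ge> L0s. \<forall>\<gamma>.
           \<gamma> \<ge> 1/4 * real n powr (-1/\<rho>) * 3 powr (- (2 * real n + 1) * real d / \<rho>)
                 * \<kappa> powr (1/\<rho>)
                 * L0 powr (- (2 * (18 ^ (N - n) * p0) + (2 * real n + 1) * real d) / \<rho>) \<longrightarrow>
           (\<exists>g0. \<forall>g. g \<noteq> 0 \<longrightarrow> \<bar>g\<bar> > g0 \<longrightarrow>
              (\<forall>E \<in> {- M * real N - 1 .. M * real N + 1}. \<forall>u. is_config n d u \<longrightarrow>
                 (\<forall>V. (\<forall>x. length x = d \<longrightarrow> V x \<in> {-M..M}) \<longrightarrow>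
                    Good n d V E \<gamma> L0 u \<longrightarrow> NS n d C0 \<tau> s0 rn g r U V E L0 u)))"
proof -
  \<comment> \<open>The Good condition alone provides the spectral gap.\<close>
  define c where "c = 1/4 * real n powr (-1/\<rho>) * 3 powr (- (2 * real n + 1) * real d / \<rho>)
                       * \<kappa> powr (1/\<rho>)"
  define e where "e = - (2 * (18 ^ (N - n) * p0) + (2 * real n + 1) * real d) / \<rho>"
  have "0 < c"
    unfolding c_def using assms(12,15) by simp
  moreover have "0 < \<tau> + e"
    unfolding e_def minus_divide_left[symmetric] using assms(18) by linarith
  ultimately obtain L0s where L0s: "\<forall>L\<ge>L0s. \<forall>\<gamma>. c * L powr e \<le> \<gamma> \<longrightarrow>
      0 < \<gamma> \<and> 1 \<le> L \<and> sqrt (5 * C0) \<le> \<gamma> * L powr \<tau>"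
    using large_scale_threshold by blast
  have "0 \<le> real n * real d / 2"
    by simp
  then have "0 \<le> s0"
    using assms(19) by linarith
  then show ?thesis
    unfolding c_def[symmetric] e_def[symmetric]
    using L0s strong_coupling_Good_imp_NS[OF less_imp_le[OF assms(3)] assms(6)] assms(22)
    by (metis less_imp_le)
qed

end
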